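(* Let $\eta>0$ and $W\ge0$. Let $x_t^{s}$ ($t\in[T]$, $t-W\le s\le t$) be the iterates of RHGD, and let $x^{(k)}$ be the iterates of offline projected gradient descent $$x_t^{(k)}=\Pi_X\big(x_t^{(k-1)}-\eta\, g_t(x_{t-1}^{(k-1)},x_t^{(k-1)},x_{t+1}^{(k-1)})\big),\quad t\in[T],\ k\ge1,$$ with $x_0^{(k)}=x_0$, both using the same stepsize $\eta$. If $x_t^{(0)}=x_t^{t-W}$ for all $t\in[T]$, then $x_t^{(W)}=x_t^t$ for all $t\in[T]$.
   Context: $X\subseteq\mathbb R^n$ is compact and convex, $\Pi_X$ is Euclidean projection onto $X$, $\beta\ge0$, $x_0\in X$, and $f_1,\dots,f_T:\mathbb R^n\to\mathbb R$ are differentiable. Partial gradients: for $t<T$, $g_t(a,b,c)=\nabla f_t(b)+\beta(2b-a-c)$; for $t=T$, $g_T(a,b,c)=\nabla f_T(b)+\beta(b-a)$, which does not depend on $c$. These are the partial gradients of $C_1^T(x)=\sum_t(f_t(x_t)+\frac\beta2\|x_t-x_{t-1}\|^2)$ with respect to $x_t$. RHGD with window $W$, stepsizes $\gamma,\eta$: - Initialization: $x_1^{1-W}=x_0$, and $x_t^{t-W}=\Pi_X(x_{t-1}^{t-1-W}-\gamma\nabla f_{t-1}(x_{t-1}^{t-1-W}))$ for $2\le t\le T$. - Updates: for $s=t-W+1,\dots,t$, $x_t^s=\Pi_X(x_t^{s-1}-\eta g_t(x_{t-1}^{s-2},x_t^{s-1},x_{t+1}^{s}))$, with the convention $x_0^s=x_0$.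 - Output at stage $t$: $x_t^t$. *)

theory Defs
  imports "HOL-Analysis.Analysis"
begin

definition grad :: "(real^'n \<Rightarrow> real) \<Rightarrow> real^'n \<Rightarrow> real^'n" where
  "grad f x = (SOME G. (f has_derivative (\<lambda>h. G \<bullet> h)) (at x))"

definition proj :: "(real^'n) set \<Rightarrow> real^'n \<Rightarrow> real^'n" where
  "proj X y = closest_point X y"

text \<open>Partial gradient g_t(a,b,c) of C_1^T with respect to x_t.\<close>
definition pgrad :: "(nat \<Rightarrow> real^'n \<Rightarrow> real) \<Rightarrow> real \<Rightarrow> nat \<Rightarrow> nat
    \<Rightarrow> real^'n \<Rightarrow> real^'n \<Rightarrow> real^'n \<Rightarrow> real^'n" where
  "pgrad f \<beta> T t a b c =
     (if t < T then grad (f t) b + \<beta> *\<^sub>R (2 *\<^sub>R b - a - c)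
      else grad (f T) b + \<beta> *\<^sub>R (b - a))"

text \<open>x t s is the RHGD iterate x_t^s (s an integer, t-W \<le> s \<le> t);
  x 0 s = x0 is the convention x_0^s = x_0.\<close>
definition is_RHGD :: "(real^'n) set \<Rightarrow> (nat \<Rightarrow> real^'n \<Rightarrow> real) \<Rightarrow> real \<Rightarrow> nat \<Rightarrow> nat
    \<Rightarrow> real \<Rightarrow> real \<Rightarrow> real^'n \<Rightarrow> (nat \<Rightarrow> int \<Rightarrow> real^'n) \<Rightarrow> bool" where
  "is_RHGD X f \<beta> T W \<gamma> \<eta> x0 x \<longleftrightarrow>
     (\<forall>s. x 0 s = x0) \<and>
     x 1 (1 - int W) = x0 \<and>
     (\<forall>t. 2 \<le> t \<and> t \<le> T \<longrightarrow>
        x t (int t - int W) =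
          proj X (x (t-1) (int (t-1) - int W) - \<gamma> *\<^sub>R grad (f (t-1)) (x (t-1) (int (t-1) - int W)))) \<and>
     (\<forall>t s. 1 \<le> t \<and> t \<le> T \<and> int t - int W + 1 \<le> s \<and> s \<le> int t \<longrightarrow>
        x t s = proj X (x t (s-1) - \<eta> *\<^sub>R pgrad f \<beta> T t (x (t-1) (s-2)) (x t (s-1)) (x (t+1) s)))"

definition is_PGD :: "(real^'n) set \<Rightarrow> (nat \<Rightarrow> real^'n \<Rightarrow> real) \<Rightarrow> real \<Rightarrow> nat
    \<Rightarrow> real \<Rightarrow> real^'n \<Rightarrow> (nat \<Rightarrow> nat \<Rightarrow> real^'n) \<Rightarrow> bool" where
  "is_PGD X f \<beta> T \<eta> x0 y \<longleftrightarrow>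
     (\<forall>k. y 0 k = x0) \<and>
     (\<forall>t k. 1 \<le> t \<and> t \<le> T \<and> 1 \<le> k \<longrightarrow>
        y t k = proj X (y t (k-1) - \<eta> *\<^sub>R pgrad f \<beta> T t (y (t-1) (k-1)) (y t (k-1)) (y (t+1) (k-1))))"

end

theory Submission
  imports Defs
begin

text \<open>RHGD at stage \<open>t\<close> performs exactly the offline gradient steps along the diagonal
  \<open>s - t = k - W\<close>: the update of \<open>x t s\<close> reads \<open>x t (s-1)\<close>, \<open>x (t-1) (s-2)\<close> and \<open>x (t+1) s\<close>,
  which all lie on the diagonal one offline step earlier (the last one is not read at all when
  \<open>t = T\<close>). Induction on the offline step \<open>k\<close> therefore gives \<open>y t k = x t (t - W + k)\<close>.
  The argument is purely combinatorial: none of the analytic hypotheses on \<open>X\<close>, \<open>f\<close>, \<open>\<beta>\<close>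
  or \<open>\<eta>\<close> is used.\<close>

lemma pgrad_last_stage_indep: "pgrad f \<beta> T T a b c = pgrad f \<beta> T T a b c'"
  by (simp add: pgrad_def)

lemma RHGD_eq_PGD_on_diagonal:
  assumes rhgd: "is_RHGD X f \<beta> T W \<gamma> \<eta> x0 x"
    and pgd: "is_PGD X f \<beta> T \<eta> x0 y"
    and init: "\<forall>t. 1 \<le> t \<and> t \<le> T \<longrightarrow> y t 0 = x t (int t - int W)"
    and "k \<le> W" and "1 \<le> t" and "t \<le> T"
  shows "y t k = x t (int t - int W + int k)"
  using assms(4-6)
proof (induction k arbitrary: t)
  case 0
  then show ?case using init by simp
next
  case (Suc k)
  define s where "s = int t - int W + int (Suc k)"
  have cur: "y t k = x t (s - 1)"
    using Suc by (simp add: s_def algebra_simps)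
  have prev: "y (t - 1) k = x (t - 1) (s - 2)"
  proof (cases "t = 1")
    case True
    then show ?thesis using rhgd pgd by (simp add: is_RHGD_def is_PGD_def)
  next
    case False
    then have "y (t - 1) k = x (t - 1) (int (t - 1) - int W + int k)"
      using Suc by simp
    also have "int (t - 1) - int W + int k = s - 2"
      using False Suc.prems by (simp add: s_def of_nat_diff)
    finally show ?thesis .
  qed
  have grad_eq: "pgrad f \<beta> T t (y (t - 1) k) (y t k) (y (t + 1) k)
      = pgrad f \<beta> T t (x (t - 1) (s - 2)) (x t (s - 1)) (x (t + 1) s)"
  proof (cases "t = T")
    case True
    then show ?thesis using cur prev pgrad_last_stage_indep by metis
  next
    case False
    then have "y (t + 1) k = x (t + 1) s"
      using Suc by (simp add: s_def algebra_simps)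
    then show ?thesis using cur prev by simp
  qed
  have "y t (Suc k) = proj X (y t k - \<eta> *\<^sub>R pgrad f \<beta> T t (y (t - 1) k) (y t k) (y (t + 1) k))"
    using pgd Suc.prems by (simp add: is_PGD_def)
  also have "\<dots> = x t s"
  proof -
    have "int t - int W + 1 \<le> s" "s \<le> int t"
      using Suc.prems by (simp_all add: s_def)
    then have "x t s = proj X (x t (s - 1) - \<eta> *\<^sub>R
        pgrad f \<beta> T t (x (t - 1) (s - 2)) (x t (s - 1)) (x (t + 1) s))"
      using rhgd Suc.prems unfolding is_RHGD_def by simp
    then show ?thesis
      unfolding grad_eq by (simp add: cur)
  qed
  finally show ?case by (simp add: s_def)
qed

theorem lemma2:
  fixes X :: "(real^'n) set" and f :: "nat \<Rightarrow> real^'n \<Rightarrow> real"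
    and \<beta> \<gamma> \<eta> :: real and T W :: nat and x0 :: "real^'n"
    and x :: "nat \<Rightarrow> int \<Rightarrow> real^'n" and y :: "nat \<Rightarrow> nat \<Rightarrow> real^'n"
  assumes "compact X" and "convex X" and "x0 \<in> X" and "\<beta> \<ge> 0" and "\<eta> > 0"
    and "\<And>t z. f t differentiable (at z)"
    and "is_RHGD X f \<beta> T W \<gamma> \<eta> x0 x"
    and "is_PGD X f \<beta> T \<eta> x0 y"
    and "\<forall>t. 1 \<le> t \<and> t \<le> T \<longrightarrow> y t 0 = x t (int t - int W)"
  shows "\<forall>t. 1 \<le> t \<and> t \<le> T \<longrightarrow> y t W = x t (int t)"
  using RHGD_eq_PGD_on_diagonal[OF assms(7-9) order_refl] by simp

end
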